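(* Both $\mathcal{P}$ and $\overline{\mathcal{P}}$ are $(1,1,2)$-quasi-balanced, i.e. if $(a,s,p)$ belongs to the set and $z\in\Delta$ then $(za,zs,z^2p)$ belongs to the set; both are starlike about $(0,0,0)$, i.e. if $x$ belongs to the set and $0\le r\le 1$ then $rx$ belongs to the set. Neither $\mathcal{P}$ nor $\overline{\mathcal{P}}$ is circled, i.e. for each of them there exist a point $x$ of the set and $\omega\in\mathbb{T}$ with $\omega x$ not in the set.
   Context: $\Delta$ is the closed unit disc and $\mathbb{T}$ the unit circle. $\mathbb{B}$ is the open unit ball of $\mathbb{C}^{2\times 2}$ (operator norm), $\pi(A)=(a_{21},\operatorname{tr}A,\det A)$, $\mathcal{P}=\pi(\mathbb{B})$, $\overline{\mathcal{P}}$ its closure. *)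

theory Defs
  imports "HOL-Analysis.Analysis"
begin

definition matball :: "(complex^2^2) set" where
  "matball = {A. onorm (\<lambda>v. A *v v) < 1}"

definition piP :: "complex^2^2 \<Rightarrow> complex \<times> complex \<times> complex" where
  "piP A = (A $ 2 $ 1, trace A, det A)"

definition pentablock :: "(complex \<times> complex \<times> complex) set" where
  "pentablock = piP ` matball"

definition quasi_balanced112 :: "(complex \<times> complex \<times> complex) set \<Rightarrow> bool" where
  "quasi_balanced112 S \<longleftrightarrow>
     (\<forall>a s p z. (a, s, p) \<in> S \<and> cmod z \<le> 1 \<longrightarrow> (z * a, z * s, z^2 * p) \<in> S)"

definition starlike0 :: "(complex \<times> complex \<times> complex) set \<Rightarrow> bool" where
  "starlike0 S \<longleftrightarrow>
     (\<forall>a s p r. (a, s, p) \<in> S \<and> 0 \<le> r \<and> r \<le> (1::real) \<longrightarrow>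
        (of_real r * a, of_real r * s, of_real r * p) \<in> S)"

definition circled :: "(complex \<times> complex \<times> complex) set \<Rightarrow> bool" where
  "circled S \<longleftrightarrow>
     (\<forall>a s p w. (a, s, p) \<in> S \<and> cmod w = 1 \<longrightarrow> (w * a, w * s, w * p) \<in> S)"

end

(*
  A 2x2 matrix A satisfies \<parallel>A\<parallel> < 1 iff |det A| < 1 and |a|\<^sup>2 + |b|\<^sup>2 + |c|\<^sup>2 + |d|\<^sup>2 < 1 + |det A|\<^sup>2:
  both say that some c < 1 dominates the Gram matrix A\<^sup>* A. Multiplying A by z with |z| \<le> 1
  keeps it in the ball and maps (a, s, p) to (z a, z s, z\<^sup>2 p). For starlikeness, scale the
  off-diagonal entries by r and choose new diagonal entries r s/2 \<plusminus> e with trace r s and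
  determinant r p; the parallelogram law and the triangle inequality for e\<^sup>2 preserve the
  criterion. Both properties pass to the closure by continuity. Finally s\<^sup>2 - 2 p = a\<^sup>2 + d\<^sup>2 + 2 b c
  gives |s\<^sup>2 - 2 p| \<le> 1 + |p|\<^sup>2 on the closure, which holds at (0, 1, 1/4) = \<pi>(I/2) but fails at
  its negative (0, -1, -1/4).
*)

theory Submission
  imports Defs
begin

lemma cmod_add_sq_expand:
  fixes a b x y :: complex
  shows "cmod (a*x + b*y)^2 = cmod a^2 * cmod x^2 + cmod b^2 * cmod y^2 + 2 * Re (cnj x * cnj a * b * y)"
  unfolding cmod_power2 by (simp add: algebra_simps power2_eq_square)

lemma sesquilinear_le_iff:
  fixes g :: complex and \<alpha> \<beta> :: real
  shows "(\<forall>x y. 2 * Re (cnj x * g * y) \<le> \<alpha> * cmod x^2 + \<beta> * cmod y^2)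
    \<longleftrightarrow> 0 \<le> \<alpha> \<and> 0 \<le> \<beta> \<and> cmod g^2 \<le> \<alpha> * \<beta>"
proof
  assume Q: "\<forall>x y. 2 * Re (cnj x * g * y) \<le> \<alpha> * cmod x^2 + \<beta> * cmod y^2"
  have \<alpha>: "0 \<le> \<alpha>" using Q[rule_format, of 1 0] by simp
  have \<beta>: "0 \<le> \<beta>" using Q[rule_format, of 0 1] by simp
  have Qt: "2 * t * cmod g^2 \<le> \<alpha> * t^2 + \<beta> * cmod g^2" for t :: real
  proof -
    have "Re (cnj (of_real t) * g * cnj g) = t * cmod g^2"
      by (simp add: mult.assoc complex_norm_square[symmetric])
    then show ?thesis using Q[rule_format, of "of_real t" "cnj g"] by simp
  qed
  have "cmod g^2 \<le> \<alpha> * \<beta>"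
  proof (cases "\<beta> = 0")
    case False
    then have "\<beta> * cmod g^2 \<le> \<beta> * (\<alpha> * \<beta>)"
      using Qt[of \<beta>] by (simp add: algebra_simps power2_eq_square)
    then show ?thesis using \<beta> False by simp
  next
    case True
    show ?thesis
    proof (rule ccontr)
      assume "\<not> ?thesis"
      then have g: "cmod g^2 > 0" using True by simp
      define t where "t = cmod g^2 / (\<alpha> + 1)"
      have t: "0 < t" "\<alpha> * t < cmod g^2"
        unfolding t_def using g \<alpha> by (simp_all add: field_simps)
      have "2 * t * cmod g^2 \<le> t * (\<alpha> * t)"
        using Qt[of t] True by (simp add: power2_eq_square algebra_simps)
      also have "\<dots> < t * cmod g^2" using t by simp
      finally show False using t g by simp
    qed
  qed
  with \<alpha> \<beta> show "0 \<le> \<alpha> \<and> 0 \<le> \<beta> \<and> cmod g^2 \<le> \<alpha> * \<beta>" by simp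
next
  assume h: "0 \<le> \<alpha> \<and> 0 \<le> \<beta> \<and> cmod g^2 \<le> \<alpha> * \<beta>"
  show "\<forall>x y. 2 * Re (cnj x * g * y) \<le> \<alpha> * cmod x^2 + \<beta> * cmod y^2"
  proof (intro allI)
    fix x y :: complex
    have "cmod g \<le> sqrt \<alpha> * sqrt \<beta>"
      using h real_le_rsqrt by (simp add: real_sqrt_mult[symmetric])
    have "Re (cnj x * g * y) \<le> cmod x * cmod g * cmod y"
      using complex_Re_le_cmod[of "cnj x * g * y"] by (simp add: norm_mult)
    also have "\<dots> \<le> cmod x * (sqrt \<alpha> * sqrt \<beta>) * cmod y"
      using \<open>cmod g \<le> sqrt \<alpha> * sqrt \<beta>\<close> h by (intro mult_mono) auto
    finally have "Re (cnj x * g * y) \<le> (sqrt \<alpha> * cmod x) * (sqrt \<beta> * cmod y)"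
      by (simp add: algebra_simps)
    moreover have "2 * ((sqrt \<alpha> * cmod x) * (sqrt \<beta> * cmod y)) \<le> (sqrt \<alpha> * cmod x)^2 + (sqrt \<beta> * cmod y)^2"
      using sum_squares_bound[of "sqrt \<alpha> * cmod x" "sqrt \<beta> * cmod y"] by (simp only: mult.assoc)
    ultimately show "2 * Re (cnj x * g * y) \<le> \<alpha> * cmod x^2 + \<beta> * cmod y^2"
      using h by (simp add: power_mult_distrib)
  qed
qed

(* The left-hand side says that c I - G is positive semidefinite for the Hermitian 2x2 matrix G
   with diagonal m1, m2 and determinant q, i.e. that c bounds both eigenvalues of G. *)
lemma scalar_dominates_gram_iff:
  fixes m1 m2 q :: real
  assumes "0 \<le> m1" "0 \<le> m2" "0 \<le> q" "q \<le> m1 * m2"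
  shows "(\<exists>c<1. m1 \<le> c \<and> m2 \<le> c \<and> m1 * m2 - q \<le> (c - m1) * (c - m2))
    \<longleftrightarrow> q < 1 \<and> m1 + m2 < 1 + q"
proof
  assume "\<exists>c<1. m1 \<le> c \<and> m2 \<le> c \<and> m1 * m2 - q \<le> (c - m1) * (c - m2)"
  then obtain c where c: "c < 1" "m1 \<le> c" "m2 \<le> c" "m1 * m2 - q \<le> (c - m1) * (c - m2)"
    by blast
  have "(c - m1) * (c - m2) \<le> (c - m1) * (1 - m2)" using c by (intro mult_left_mono) auto
  also have "\<dots> < (1 - m1) * (1 - m2)" using c by (intro mult_strict_right_mono) auto
  finally have "(c - m1) * (c - m2) < (1 - m1) * (1 - m2)" .
  moreover have "m1 * m2 \<le> c * c" using c assms by (intro mult_mono) auto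
  moreover have "c * c < 1" using c assms mult_left_le_one_le[of c c] by simp
  ultimately show "q < 1 \<and> m1 + m2 < 1 + q" using c assms by (simp add: algebra_simps)
next
  assume h: "q < 1 \<and> m1 + m2 < 1 + q"
  define X where "X = 1 - m1"
  define Y where "Y = 1 - m2"
  define g2 where "g2 = m1 * m2 - q"
  have det_pos: "X * Y - g2 > 0" and trace_pos: "X + Y > 0"
    using h unfolding X_def Y_def g2_def by (simp_all add: algebra_simps)
  have "X > 0" "Y > 0"
    using det_pos trace_pos assms unfolding g2_def by (smt (verit) mult_nonpos_nonneg mult_nonneg_nonpos)+
  define e where "e = (X * Y - g2) / (X + Y)"
  have "0 \<le> g2" using assms unfolding g2_def by simp
  then have e: "0 < e" "e \<le> X" "e \<le> Y" "e * (X + Y) = X * Y - g2"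
    unfolding e_def using det_pos trace_pos \<open>X > 0\<close> \<open>Y > 0\<close> by (simp_all add: field_simps)
  show "\<exists>c<1. m1 \<le> c \<and> m2 \<le> c \<and> m1 * m2 - q \<le> (c - m1) * (c - m2)"
  proof (intro exI conjI)
    have "(X - e) * (Y - e) = g2 + e^2" using e by (simp add: algebra_simps power2_eq_square)
    then show "m1 * m2 - q \<le> (1 - e - m1) * (1 - e - m2)"
      unfolding X_def Y_def g2_def by (simp add: algebra_simps)
  qed (use e in \<open>auto simp: X_def Y_def\<close>)
qed

lemma norm_vec_cmult: "norm (\<chi> i. z * w $ i) = cmod z * norm (w :: complex ^ 'n)"
  by (simp add: norm_vec_def norm_mult L2_set_right_distrib)

lemma onorm_matrix_cmult_le:
  fixes A :: "complex ^ 'n ^ 'm"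
  shows "onorm (\<lambda>v. (\<chi> i j. z * A $ i $ j) *v v) \<le> cmod z * onorm (\<lambda>v. A *v v)"
proof (rule onorm_le)
  fix v :: "complex ^ 'n"
  have "(\<chi> i j. z * A $ i $ j) *v v = (\<chi> i. z * (A *v v) $ i)"
    by (simp add: matrix_vector_mult_def vec_eq_iff sum_distrib_left mult.assoc)
  then have "norm ((\<chi> i j. z * A $ i $ j) *v v) = cmod z * norm (A *v v)"
    by (simp add: norm_vec_cmult)
  also have "\<dots> \<le> cmod z * (onorm (\<lambda>v. A *v v) * norm v)"
    by (intro mult_left_mono onorm) auto
  finally show "norm ((\<chi> i j. z * A $ i $ j) *v v) \<le> cmod z * onorm (\<lambda>v. A *v v) * norm v"
    by (simp add: mult.assoc)
qed

lemma onorm_lt_one_iff: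
  fixes f :: "'a::{real_normed_vector, perfect_space} \<Rightarrow> 'b::real_normed_vector"
  assumes "bounded_linear f"
  shows "onorm f < 1 \<longleftrightarrow> (\<exists>k. 0 \<le> k \<and> k < 1 \<and> (\<forall>x. norm (f x) \<le> k * norm x))"
  using onorm[OF assms] onorm_pos_le[OF assms] onorm_le by (meson le_less_trans)

definition mat2 :: "complex \<Rightarrow> complex \<Rightarrow> complex \<Rightarrow> complex \<Rightarrow> complex^2^2" where
  "mat2 a b c d = (\<chi> i j. if i = 1 then (if j = 1 then a else b) else (if j = 1 then c else d))"

lemma mat2_nth [simp]:
  "mat2 a b c d $ 1 $ 1 = a" "mat2 a b c d $ 1 $ 2 = b"
  "mat2 a b c d $ 2 $ 1 = c" "mat2 a b c d $ 2 $ 2 = d"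
  by (simp_all add: mat2_def)

lemma mat2_eta: "mat2 (A$1$1) (A$1$2) (A$2$1) (A$2$2) = A"
  by (simp add: mat2_def vec_eq_iff forall_2)

lemma norm_vec2_sq: "norm (v :: complex^2)^2 = cmod (v$1)^2 + cmod (v$2)^2"
  by (simp add: norm_vec_def L2_set_def sum_2)

definition strict_contraction2 :: "complex \<Rightarrow> complex \<Rightarrow> complex \<Rightarrow> complex \<Rightarrow> bool" where
  "strict_contraction2 a b c d \<longleftrightarrow> cmod (a*d - b*c) < 1
     \<and> cmod a^2 + cmod b^2 + cmod c^2 + cmod d^2 < 1 + cmod (a*d - b*c)^2"

lemma norm_mat2_mult_sq:
  "norm (mat2 a b c d *v v)^2 = (cmod a^2 + cmod c^2) * cmod (v$1)^2 + (cmod b^2 + cmod d^2) * cmod (v$2)^2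
     + 2 * Re (cnj (v$1) * (cnj a * b + cnj c * d) * v$2)"
  by (simp add: norm_vec2_sq matrix_vector_mult_def sum_2 cmod_add_sq_expand algebra_simps)

lemma cmod_gram_sq: "cmod (cnj a * b + cnj c * d)^2 = (cmod a^2 + cmod c^2) * (cmod b^2 + cmod d^2) - cmod (a*d - b*c)^2"
  unfolding cmod_power2 by (simp add: algebra_simps power2_eq_square)

lemma mat2_bounded_iff:
  fixes k :: real and a b c d :: complex
  assumes "0 \<le> k"
  defines "m1 \<equiv> cmod a^2 + cmod c^2" and "m2 \<equiv> cmod b^2 + cmod d^2"
  shows "(\<forall>v. norm (mat2 a b c d *v v) \<le> k * norm v)
    \<longleftrightarrow> m1 \<le> k^2 \<and> m2 \<le> k^2 \<and> m1 * m2 - cmod (a*d - b*c)^2 \<le> (k^2 - m1) * (k^2 - m2)"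
proof -
  let ?g = "cnj a * b + cnj c * d"
  have pointwise: "norm (mat2 a b c d *v v) \<le> k * norm v \<longleftrightarrow>
      2 * Re (cnj (v$1) * ?g * v$2) \<le> (k^2 - m1) * cmod (v$1)^2 + (k^2 - m2) * cmod (v$2)^2" for v
  proof -
    have "norm (mat2 a b c d *v v) \<le> k * norm v \<longleftrightarrow> norm (mat2 a b c d *v v)^2 \<le> (k * norm v)^2"
      using assms by (simp add: power_mono_iff)
    then show ?thesis
      by (simp only: norm_mat2_mult_sq power_mult_distrib norm_vec2_sq[of v] m1_def m2_def)
        (simp add: algebra_simps del: times_complex.sel)
  qed
  then have "(\<forall>v. norm (mat2 a b c d *v v) \<le> k * norm v) \<longleftrightarrow>
      (\<forall>v::complex^2. 2 * Re (cnj (v$1) * ?g * v$2) \<le> (k^2 - m1) * cmod (v$1)^2 + (k^2 - m2) * cmod (v$2)^2)"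
    by blast
  also have "(\<forall>v::complex^2. 2 * Re (cnj (v$1) * ?g * v$2) \<le> (k^2 - m1) * cmod (v$1)^2 + (k^2 - m2) * cmod (v$2)^2)
      \<longleftrightarrow> (\<forall>x y. 2 * Re (cnj x * ?g * y) \<le> (k^2 - m1) * cmod x^2 + (k^2 - m2) * cmod y^2)"
  proof
    assume "\<forall>v::complex^2. 2 * Re (cnj (v$1) * ?g * v$2) \<le> (k^2 - m1) * cmod (v$1)^2 + (k^2 - m2) * cmod (v$2)^2"
    then show "\<forall>x y. 2 * Re (cnj x * ?g * y) \<le> (k^2 - m1) * cmod x^2 + (k^2 - m2) * cmod y^2"
      by (metis vector_2(1) vector_2(2))
  qed auto
  also have "\<dots> \<longleftrightarrow> m1 \<le> k^2 \<and> m2 \<le> k^2 \<and> cmod ?g ^2 \<le> (k^2 - m1) * (k^2 - m2)"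
    by (simp only: sesquilinear_le_iff diff_ge_0_iff_ge)
  finally show ?thesis unfolding cmod_gram_sq m1_def m2_def .
qed

lemma mat2_in_matball_iff: "mat2 a b c d \<in> matball \<longleftrightarrow> strict_contraction2 a b c d"
proof -
  define m1 where "m1 = cmod a^2 + cmod c^2"
  define m2 where "m2 = cmod b^2 + cmod d^2"
  define q where "q = cmod (a*d - b*c)^2"
  have "mat2 a b c d \<in> matball \<longleftrightarrow> (\<exists>k. 0 \<le> k \<and> k < 1 \<and> m1 \<le> k^2 \<and> m2 \<le> k^2 \<and> m1 * m2 - q \<le> (k^2 - m1) * (k^2 - m2))"
    unfolding matball_def onorm_lt_one_iff[OF matrix_vector_mul_bounded_linear]
    by (simp add: mat2_bounded_iff m1_def m2_def q_def cong: conj_cong)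
  also have "\<dots> \<longleftrightarrow> (\<exists>c<1. m1 \<le> c \<and> m2 \<le> c \<and> m1 * m2 - q \<le> (c - m1) * (c - m2))"
  proof
    assume "\<exists>c<1. m1 \<le> c \<and> m2 \<le> c \<and> m1 * m2 - q \<le> (c - m1) * (c - m2)"
    then obtain c where "c < 1" "m1 \<le> c" "m2 \<le> c" "m1 * m2 - q \<le> (c - m1) * (c - m2)" by blast
    moreover have "0 \<le> c" using \<open>m1 \<le> c\<close> unfolding m1_def by (smt (verit) zero_le_power2)
    ultimately show "\<exists>k. 0 \<le> k \<and> k < 1 \<and> m1 \<le> k^2 \<and> m2 \<le> k^2 \<and> m1 * m2 - q \<le> (k^2 - m1) * (k^2 - m2)"
      by (intro exI[of _ "sqrt c"]) auto
  next
    assume "\<exists>k. 0 \<le> k \<and> k < 1 \<and> m1 \<le> k^2 \<and> m2 \<le> k^2 \<and> m1 * m2 - q \<le> (k^2 - m1) * (k^2 - m2)"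
    then obtain k where "0 \<le> k" "k < 1" "m1 \<le> k^2" "m2 \<le> k^2" "m1 * m2 - q \<le> (k^2 - m1) * (k^2 - m2)"
      by blast
    then show "\<exists>c<1. m1 \<le> c \<and> m2 \<le> c \<and> m1 * m2 - q \<le> (c - m1) * (c - m2)"
      by (intro exI[of _ "k^2"]) (simp add: power_less_one_iff)
  qed
  also have "\<dots> \<longleftrightarrow> q < 1 \<and> m1 + m2 < 1 + q"
  proof (rule scalar_dominates_gram_iff)
    show "q \<le> m1 * m2"
      using cmod_gram_sq[of a b c d] zero_le_power2[of "cmod (cnj a * b + cnj c * d)"]
      unfolding m1_def m2_def q_def by linarith
  qed (simp_all add: m1_def m2_def q_def)
  finally show ?thesis
    unfolding strict_contraction2_def m1_def m2_def q_def by (simp add: power_less_one_iff algebra_simps)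
qed

lemma piP_mat2: "piP (mat2 a b c d) = (c, a + d, a*d - b*c)"
  by (simp add: piP_def trace_def sum_2 det_2)

lemma pentablock_iff:
  "x \<in> pentablock \<longleftrightarrow> (\<exists>a b c d. strict_contraction2 a b c d \<and> x = (c, a + d, a*d - b*c))"
  unfolding pentablock_def
  by (metis (no_types, lifting) image_iff mat2_eta mat2_in_matball_iff piP_mat2)

lemma matball_cmult:
  assumes "A \<in> matball" "cmod z \<le> 1"
  shows "(\<chi> i j. z * A $ i $ j) \<in> matball"
proof -
  have "onorm (\<lambda>v. (\<chi> i j. z * A $ i $ j) *v v) \<le> cmod z * onorm (\<lambda>v. A *v v)"
    by (rule onorm_matrix_cmult_le)
  also have "\<dots> \<le> onorm (\<lambda>v. A *v v)"
    using assms(2) onorm_pos_le[OF matrix_vector_mul_bounded_linear[of A]]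
    by (simp add: mult_left_le_one_le)
  finally show ?thesis using assms(1) unfolding matball_def by simp
qed

lemma quasi_balanced112_pentablock: "quasi_balanced112 pentablock"
  unfolding quasi_balanced112_def
proof (intro allI impI)
  fix a s p z assume "(a, s, p) \<in> pentablock \<and> cmod z \<le> 1"
  then obtain A where A: "A \<in> matball" "piP A = (a, s, p)" and z: "cmod z \<le> 1"
    unfolding pentablock_def by auto
  have asp: "a = A$2$1" "s = A$1$1 + A$2$2" "p = A$1$1 * A$2$2 - A$1$2 * A$2$1"
    using A(2) unfolding piP_def trace_def sum_2 det_2 by auto
  have "piP (\<chi> i j. z * A $ i $ j) = (z * a, z * s, z^2 * p)"
    unfolding asp by (simp add: piP_def trace_def sum_2 det_2 algebra_simps power2_eq_square)
  then show "(z * a, z * s, z^2 * p) \<in> pentablock"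
    using matball_cmult[OF A(1) z] unfolding pentablock_def by (metis image_eqI)
qed

lemma parallelogram_law_cmod: "cmod (u + w)^2 + cmod (u - w)^2 = 2 * cmod u^2 + 2 * cmod w^2"
  unfolding cmod_power2 by (simp add: algebra_simps power2_eq_square)

lemma shrink_frobenius_bound:
  fixes r P F :: real
  assumes "0 \<le> r" "r \<le> 1" "0 \<le> P" "P < 1" "F < 1 + P^2"
  shows "r^2 * F + 2 * r * (1 - r) * P < 1 + (r * P)^2"
proof (cases "r = 0")
  case False
  then have "r^2 * F < r^2 * (1 + P^2)" using assms by simp
  moreover have "0 \<le> (1 - r) * (1 + r - 2 * r * P)"
    using assms mult_left_le_one_le[of P r] mult_right_le_one_le[of r P] by (intro mult_nonneg_nonneg) auto
  ultimately show ?thesis by (simp add: algebra_simps power2_eq_square)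
qed simp

lemma strict_contraction2_shrink:
  fixes r :: real
  assumes sc: "strict_contraction2 a b c d" and r: "0 \<le> r" "r \<le> 1"
  obtains a' d' where "strict_contraction2 a' (of_real r * b) (of_real r * c) d'"
    and "a' + d' = of_real r * (a + d)"
    and "a' * d' - of_real r * b * (of_real r * c) = of_real r * (a*d - b*c)"
proof -
  define R where "R = complex_of_real r"
  (* New diagonal entries R h \<plusminus> e: the trace scales by R, and e is chosen so the determinant does. *)
  define h where "h = (a + d) / 2"
  define \<delta> where "\<delta> = (a - d) / 2"
  define p where "p = a*d - b*c"
  define e where "e = csqrt (R^2 * \<delta>^2 - R * (1 - R) * p)"
  have e2: "e^2 = R^2 * \<delta>^2 - R * (1 - R) * p" unfolding e_def by simp
  have ad: "a = h + \<delta>" "d = h - \<delta>" unfolding h_def \<delta>_def by (simp_all add: field_simps)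
  have cR: "cmod R = r" "cmod (1 - R) = 1 - r"
    using r norm_of_real[of "1 - r"] by (simp_all add: R_def)
  have trace: "(R*h + e) + (R*h - e) = R * (a + d)" unfolding h_def by (simp add: algebra_simps)
  have "(R*h + e) * (R*h - e) - R*b * (R*c) = R^2 * h^2 - e^2 - R^2 * (b*c)"
    by (simp add: algebra_simps power2_eq_square)
  also have "\<dots> = R * p" unfolding e2 p_def ad by (simp add: algebra_simps power2_eq_square)
  finally have det: "(R*h + e) * (R*h - e) - R*b * (R*c) = R * p" .
  have e_bound: "cmod e^2 \<le> r^2 * cmod \<delta>^2 + r * (1 - r) * cmod p"
  proof -
    have "cmod e^2 = cmod (R^2 * \<delta>^2 - R * (1 - R) * p)" by (simp flip: e2 add: norm_power)
    also have "\<dots> \<le> cmod (R^2 * \<delta>^2) + cmod (R * (1 - R) * p)" by (rule norm_triangle_ineq4)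
    finally show ?thesis using cR by (simp add: norm_mult norm_power)
  qed
  define F where "F = cmod a^2 + cmod b^2 + cmod c^2 + cmod d^2"
  have F: "F = 2 * cmod h^2 + 2 * cmod \<delta>^2 + cmod b^2 + cmod c^2"
    unfolding F_def ad using parallelogram_law_cmod[of h \<delta>] by simp
  have "cmod (R*h + e)^2 + cmod (R*b)^2 + cmod (R*c)^2 + cmod (R*h - e)^2
      = 2 * r^2 * cmod h^2 + 2 * cmod e^2 + r^2 * (cmod b^2 + cmod c^2)"
    using parallelogram_law_cmod[of "R*h" e] cR by (simp add: norm_mult power_mult_distrib algebra_simps)
  also have "\<dots> \<le> r^2 * F + 2 * r * (1 - r) * cmod p"
    using e_bound unfolding F by (simp add: algebra_simps)
  also have "\<dots> < 1 + cmod (R * p)^2"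
    using shrink_frobenius_bound[OF r] sc cR unfolding strict_contraction2_def F_def p_def
    by (simp add: norm_mult)
  moreover have "cmod (R * p) < 1"
    using sc cR r mult_left_le_one_le[of "cmod p" r] unfolding strict_contraction2_def p_def
    by (simp add: norm_mult)
  ultimately have "strict_contraction2 (R*h + e) (R*b) (R*c) (R*h - e)"
    unfolding strict_contraction2_def det by simp
  with trace det that show ?thesis unfolding R_def p_def by blast
qed

lemma starlike0_pentablock: "starlike0 pentablock"
  unfolding starlike0_def
proof (intro allI impI)
  fix a s p and r :: real assume h: "(a, s, p) \<in> pentablock \<and> 0 \<le> r \<and> r \<le> 1"
  then obtain a0 b0 c0 d0 where sc: "strict_contraction2 a0 b0 c0 d0"
    and asp: "a = c0" "s = a0 + d0" "p = a0*d0 - b0*c0"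
    unfolding pentablock_iff by auto
  obtain a1 d1 where "strict_contraction2 a1 (of_real r * b0) (of_real r * c0) d1"
    "a1 + d1 = of_real r * (a0 + d0)"
    "a1 * d1 - of_real r * b0 * (of_real r * c0) = of_real r * (a0*d0 - b0*c0)"
    using strict_contraction2_shrink[OF sc] h by blast
  then show "(of_real r * a, of_real r * s, of_real r * p) \<in> pentablock"
    unfolding pentablock_iff asp by metis
qed

lemma image_closure_subset_closure:
  assumes "continuous_on UNIV f" "f ` S \<subseteq> S"
  shows "f ` closure S \<subseteq> closure S"
  by (rule image_closure_subset) (use assms closure_subset in \<open>auto intro: continuous_on_subset\<close>)

lemma quasi_balanced112_closure:
  assumes "quasi_balanced112 S"
  shows "quasi_balanced112 (closure S)"
  unfolding quasi_balanced112_def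
proof (intro allI impI)
  fix a s p z assume h: "(a, s, p) \<in> closure S \<and> cmod z \<le> 1"
  let ?f = "\<lambda>x. (z * fst x, z * fst (snd x), z^2 * snd (snd x))"
  have "?f ` S \<subseteq> S"
  proof (rule image_subsetI)
    fix x assume "x \<in> S"
    then show "?f x \<in> S" using assms h unfolding quasi_balanced112_def by (metis prod.collapse)
  qed
  moreover have "continuous_on UNIV ?f" by (intro continuous_intros)
  ultimately have "?f ` closure S \<subseteq> closure S" by (intro image_closure_subset_closure)
  with h have "?f (a, s, p) \<in> closure S" by blast
  then show "(z * a, z * s, z^2 * p) \<in> closure S" by simp
qed

lemma starlike0_closure:
  assumes "starlike0 S"
  shows "starlike0 (closure S)"
  unfolding starlike0_def
proof (intro allI impI)
  fix a s p and r :: real assume h: "(a, s, p) \<in> closure S \<and> 0 \<le> r \<and> r \<le> 1"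
  let ?f = "\<lambda>x :: complex \<times> complex \<times> complex. (of_real r * fst x, of_real r * fst (snd x), of_real r * snd (snd x))"
  have "?f ` S \<subseteq> S"
  proof (rule image_subsetI)
    fix x assume "x \<in> S"
    then show "?f x \<in> S" using assms h unfolding starlike0_def by (metis prod.collapse)
  qed
  moreover have "continuous_on UNIV ?f" by (intro continuous_intros)
  ultimately have "?f ` closure S \<subseteq> closure S" by (intro image_closure_subset_closure)
  with h have "?f (a, s, p) \<in> closure S" by blast
  then show "(of_real r * a, of_real r * s, of_real r * p) \<in> closure S" by simp
qed

lemma strict_contraction2_trace_sq_bound:
  assumes "strict_contraction2 a b c d"
  shows "cmod ((a + d)^2 - 2 * (a*d - b*c)) < 1 + cmod (a*d - b*c)^2"
proof -
  have "(a + d)^2 - 2 * (a*d - b*c) = a^2 + d^2 + 2 * (b*c)" by (simp add: algebra_simps power2_eq_square)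
  then have "cmod ((a + d)^2 - 2 * (a*d - b*c)) \<le> cmod a^2 + cmod d^2 + 2 * (cmod b * cmod c)"
    by (metis norm_triangle_le norm_mult norm_power norm_mult_numeral1 norm_triangle_ineq add_mono order_refl)
  also have "\<dots> \<le> cmod a^2 + cmod b^2 + cmod c^2 + cmod d^2"
    using sum_squares_bound[of "cmod b" "cmod c"] by simp
  finally show ?thesis using assms unfolding strict_contraction2_def by simp
qed

lemma closure_pentablock_subset:
  "closure pentablock \<subseteq> {x. cmod (fst (snd x)^2 - 2 * snd (snd x)) \<le> 1 + cmod (snd (snd x))^2}"
proof (rule closure_minimal)
  show "pentablock \<subseteq> {x. cmod (fst (snd x)^2 - 2 * snd (snd x)) \<le> 1 + cmod (snd (snd x))^2}"
    using strict_contraction2_trace_sq_bound by (fastforce simp: pentablock_iff)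
qed (intro closed_Collect_le continuous_intros)

lemma half_identity_in_pentablock: "(0, 1, 1/4) \<in> pentablock"
proof -
  have "strict_contraction2 (1/2) 0 0 (1/2)"
    unfolding strict_contraction2_def by (simp add: power2_eq_square norm_divide)
  then show ?thesis unfolding pentablock_iff by (intro exI[of _ "1/2"] exI[of _ 0]) simp
qed

lemma not_circled_between:
  assumes "(0, 1, 1/4) \<in> S" "S \<subseteq> closure pentablock"
  shows "\<not> circled S"
proof
  assume "circled S"
  then have "(-1 * 0, -1 * 1, -1 * (1/4)) \<in> S"
    using assms(1) unfolding circled_def by (metis norm_minus_cancel norm_one)
  then have "cmod ((-1)^2 - 2 * (-1/4 :: complex)) \<le> 1 + cmod (-1/4 :: complex)^2"
    using assms(2) closure_pentablock_subset by auto
  moreover have "(-1)^2 - 2 * (-1/4 :: complex) = of_real (3/2)" "(-1/4 :: complex) = of_real (-1/4)"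
    by simp_all
  ultimately show False by (simp only: norm_of_real) (simp add: power2_eq_square)
qed

theorem theorem6p2:
  shows "quasi_balanced112 pentablock \<and> quasi_balanced112 (closure pentablock)
    \<and> starlike0 pentablock \<and> starlike0 (closure pentablock)
    \<and> \<not> circled pentablock \<and> \<not> circled (closure pentablock)"
  using quasi_balanced112_pentablock quasi_balanced112_closure starlike0_pentablock starlike0_closure
    not_circled_between half_identity_in_pentablock closure_subset by blast

end
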